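(* Let $p$ be an odd prime. Then $$\prod_{\substack{i,j=1\\ p\nmid i^2-j^2}}^{(p-1)/2}(i^2-j^2)\equiv-\left(\frac{2}{p}\right)\pmod p.$$
   Context: $\left(\frac{\cdot}{p}\right)$ denotes the Legendre symbol. *)

theory Defs
  imports "HOL-Number_Theory.Number_Theory"
begin

end

theory Submission
  imports Defs
begin

text \<open>
  Write \<open>p = 2n + 1\<close>; for \<open>i, j \<in> [1, n]\<close> the prime \<open>p\<close> divides \<open>i\<^sup>2 - j\<^sup>2\<close> only when \<open>i = j\<close>.
  For \<open>1 \<le> i \<le> n\<close> the nonzero integers of the window \<open>[i - n, i + n]\<close> form a reduced
  residue system mod \<open>p\<close>, so by Wilson their product is \<open>-1\<close>; on the other hand it equals
  \<open>2 i\<^sup>2 \<Prod>\<^sub>j\<^sub>\<noteq>\<^sub>i (i\<^sup>2 - j\<^sup>2)\<close>. Multiplying over \<open>i\<close> gives \<open>2\<^sup>n (n!)\<^sup>2 X \<equiv> (-1)\<^sup>n\<close> for the product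
  \<open>X\<close> in question, while the window centred at \<open>0\<close> gives \<open>(-1)\<^sup>n (n!)\<^sup>2 \<equiv> -1\<close>. Hence
  \<open>2\<^sup>n X \<equiv> -1\<close>, and Euler's criterion \<open>2\<^sup>n \<equiv> (2/p) = \<plusminus>1\<close> finishes the proof.
\<close>

lemma wilson_interval:
  fixes p :: nat and a :: int
  assumes "prime p" and "a \<le> 0" and "0 < a + int p"
  shows "[(\<Prod>k\<in>{a..a + int p - 1} - {0}. k) = -1] (mod int p)"
proof -
  let ?q = "int p"
  have q: "?q > 0" using assms(1) prime_gt_0_nat by simp
  have "(\<Prod>k\<in>{a..a + ?q - 1} - {0}. k mod ?q) = (\<Prod>b\<in>{1..?q - 1}. b)"
  proof (rule prod.reindex_bij_witness[where j = "\<lambda>k. k mod ?q" and i = "\<lambda>b. a + (b - a) mod ?q"])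
    fix k assume k: "k \<in> {a..a + ?q - 1} - {0}"
    have "\<not> ?q dvd k"
    proof
      assume "?q dvd k"
      then have "?q \<le> \<bar>k\<bar>" using k dvd_imp_le_int[of k ?q] by auto
      with k assms(2,3) show False by auto
    qed
    moreover have "0 \<le> k mod ?q" "k mod ?q < ?q" using q by simp_all
    ultimately show "k mod ?q \<in> {1..?q - 1}" by (auto simp: dvd_eq_mod_eq_0)
    have "(k - a) mod ?q = k - a" using k by (intro mod_pos_pos_trivial) auto
    then show "a + (k mod ?q - a) mod ?q = k" by (simp add: mod_diff_left_eq)
  next
    fix b assume b: "b \<in> {1..?q - 1}"
    then show "(a + (b - a) mod ?q) mod ?q = b" by (simp add: mod_add_right_eq)
    then have "a + (b - a) mod ?q \<noteq> 0" using b by auto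
    moreover have "0 \<le> (b - a) mod ?q" "(b - a) mod ?q < ?q" using q by simp_all
    ultimately show "a + (b - a) mod ?q \<in> {a..a + ?q - 1} - {0}" by auto
  qed simp
  also have "(\<Prod>b\<in>{1..?q - 1}. b) = fact (p - 1)"
    unfolding fact_prod of_nat_prod
    by (rule prod.reindex_bij_witness[where i = int and j = nat]) auto
  finally have "[(\<Prod>k\<in>{a..a + ?q - 1} - {0}. k) = fact (p - 1)] (mod ?q)"
    using cong_prod[of _ "\<lambda>k. k mod ?q" "\<lambda>k. k"] by (metis cong_def mod_mod_trivial)
  then show ?thesis using wilson_theorem[OF assms(1)] by (rule cong_trans)
qed

lemma prod_nonzero_window:
  fixes i n :: int
  assumes "1 \<le> i" and "i \<le> n"
  shows "(\<Prod>k\<in>{i - n..i + n} - {0}. k) = 2 * i^2 * (\<Prod>j\<in>{1..n} - {i}. i^2 - j^2)"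
proof -
  let ?A = "{1..n} - {i}"
  have split: "{i - n..i + n} - {0} = ({i - n..i} - {0}) \<union> {i + 1..i + n}" using assms by auto
  have "(\<Prod>k\<in>{i - n..i + n} - {0}. k) = (\<Prod>k\<in>{i - n..i} - {0}. k) * (\<Prod>k\<in>{i + 1..i + n}. k)"
    unfolding split by (rule prod.union_disjoint) auto
  also have "(\<Prod>k\<in>{i - n..i} - {0}. k) = (\<Prod>j\<in>insert 0 ?A. i - j)"
    using assms by (intro prod.reindex_bij_witness[where i = "\<lambda>j. i - j" and j = "\<lambda>k. i - k"]) auto
  also have "\<dots> = i * (\<Prod>j\<in>?A. i - j)" by simp
  also have "(\<Prod>k\<in>{i + 1..i + n}. k) = (\<Prod>j\<in>{1..n}. i + j)"
    by (rule prod.reindex_bij_witness[where i = "\<lambda>j. i + j" and j = "\<lambda>k. k - i"]) auto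
  also have "\<dots> = 2 * i * (\<Prod>j\<in>?A. i + j)"
    using assms by (simp add: prod.remove[of "{1..n}" i])
  also have "i * (\<Prod>j\<in>?A. i - j) * (2 * i * (\<Prod>j\<in>?A. i + j))
      = 2 * i^2 * (\<Prod>j\<in>?A. (i - j) * (i + j))"
    by (simp add: prod.distrib power2_eq_square)
  also have "(\<Prod>j\<in>?A. (i - j) * (i + j)) = (\<Prod>j\<in>?A. i^2 - j^2)"
    by (simp add: power2_eq_square algebra_simps)
  finally show ?thesis .
qed

lemma prod_nonzero_symmetric_interval:
  fixes n :: int
  shows "(\<Prod>k\<in>{-n..n} - {0}. k) = (-1) ^ nat n * (\<Prod>k\<in>{1..n}. k)^2"
proof -
  have split: "{-n..n} - {0} = {-n..-1} \<union> {1..n}" by auto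
  have "(\<Prod>k\<in>{-n..n} - {0}. k) = (\<Prod>k\<in>{-n..-1}. k) * (\<Prod>k\<in>{1..n}. k)"
    unfolding split by (rule prod.union_disjoint) auto
  also have "(\<Prod>k\<in>{-n..-1}. k) = (\<Prod>k\<in>{1..n}. -k)"
    by (rule prod.reindex_bij_witness[where i = uminus and j = uminus]) auto
  also have "\<dots> = (-1) ^ nat n * (\<Prod>k\<in>{1..n}. k)"
    by (simp add: prod_uminus)
  finally show ?thesis by (simp add: power2_eq_square)
qed

lemma diff_squares_row_cong:
  fixes p :: nat and n i :: int
  assumes "prime p" and "int p = 2 * n + 1" and "1 \<le> i" and "i \<le> n"
  shows "[2 * i^2 * (\<Prod>j\<in>{1..n} - {i}. i^2 - j^2) = -1] (mod int p)"
proof -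
  have "[(\<Prod>k\<in>{i - n..i - n + int p - 1} - {0}. k) = -1] (mod int p)"
    by (rule wilson_interval) (use assms in auto)
  moreover have "i - n + int p - 1 = i + n" using assms(2) by simp
  ultimately show ?thesis by (simp only: prod_nonzero_window[OF assms(3,4)])
qed

lemma diff_squares_table_cong:
  fixes p :: nat and n :: int
  assumes "prime p" and "int p = 2 * n + 1"
  shows "[2 ^ nat n * (\<Prod>i\<in>{1..n}. \<Prod>j\<in>{1..n} - {i}. i^2 - j^2) = -1] (mod int p)"
proof -
  define F where "F = (\<Prod>i\<in>{1..n}. i)^2"
  define E :: int where "E = (-1) ^ nat n"
  let ?X = "\<Prod>i\<in>{1..n}. \<Prod>j\<in>{1..n} - {i}. i^2 - j^2"
  have "(\<Prod>i\<in>{1..n}. 2 * i^2 * (\<Prod>j\<in>{1..n} - {i}. i^2 - j^2)) = 2 ^ nat n * F * ?X"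
    unfolding F_def by (simp add: prod.distrib prod_power_distrib)
  moreover have "[(\<Prod>i\<in>{1..n}. 2 * i^2 * (\<Prod>j\<in>{1..n} - {i}. i^2 - j^2)) = (\<Prod>i\<in>{1..n}. -1)] (mod int p)"
    using diff_squares_row_cong[OF assms] by (intro cong_prod) auto
  ultimately have rows: "[2 ^ nat n * F * ?X = E] (mod int p)"
    unfolding E_def by simp
  have "n \<ge> 0" using assms prime_gt_1_nat[OF assms(1)] by linarith
  then have centre: "[E * F = -1] (mod int p)"
    using wilson_interval[OF assms(1), of "-n"] assms(2) prod_nonzero_symmetric_interval[of n]
    unfolding E_def F_def by simp
  have "[2 ^ nat n * ?X * (-1) = 2 ^ nat n * ?X * (E * F)] (mod int p)"
    using centre by (intro cong_mult cong_refl) (rule cong_sym)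
  also have "2 ^ nat n * ?X * (E * F) = (2 ^ nat n * F * ?X) * E" by (simp add: ac_simps)
  also have "[(2 ^ nat n * F * ?X) * E = E * E] (mod int p)"
    using rows by (intro cong_mult cong_refl)
  also have "E * E = 1" unfolding E_def by (simp flip: power_add)
  finally have "[- (2 ^ nat n * ?X) = - (-1)] (mod int p)" by simp
  then show ?thesis by (simp only: cong_minus_minus_iff)
qed

lemma prime_dvd_diff_squares_iff:
  fixes p :: nat and n i j :: int
  assumes "prime p" and "int p = 2 * n + 1" and "i \<in> {1..n}" and "j \<in> {1..n}"
  shows "int p dvd (i^2 - j^2) \<longleftrightarrow> i = j"
proof
  assume "int p dvd (i^2 - j^2)"
  moreover have "i^2 - j^2 = (i - j) * (i + j)" by (simp add: power2_eq_square algebra_simps)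
  ultimately have "int p dvd (i - j) \<or> int p dvd (i + j)"
    using assms(1) by (simp add: prime_dvd_mult_iff)
  moreover have "\<not> int p dvd (i + j)" using assms zdvd_imp_le[of "int p" "i + j"] by auto
  ultimately have "int p dvd (i - j)" by simp
  then show "i = j" using assms dvd_imp_le_int[of "i - j" "int p"] by (cases "i = j") auto
qed simp

lemma Legendre_squared:
  assumes "\<not> [a = 0] (mod p)"
  shows "Legendre a p * Legendre a p = 1"
  using assms by (simp add: Legendre_def)

theorem mainTheorem10:
  fixes p :: nat
  assumes "prime p" and "odd p"
  shows "[(\<Prod>(i, j) \<in> {(i, j). i \<in> {1..(int p - 1) div 2} \<and> j \<in> {1..(int p - 1) div 2}
              \<and> \<not> int p dvd (i^2 - j^2)}. (i^2 - j^2)) = - Legendre 2 (int p)] (mod int p)"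
proof -
  define n where "n = (int p - 1) div 2"
  define L where "L = Legendre 2 (int p)"
  have p2: "p > 2" using assms prime_ge_2_nat[of p] by (metis dvd_refl le_neq_implies_less)
  have pn: "int p = 2 * n + 1" using assms(2) unfolding n_def by presburger
  let ?X = "\<Prod>(i, j) \<in> {(i, j). i \<in> {1..n} \<and> j \<in> {1..n} \<and> \<not> int p dvd (i^2 - j^2)}. i^2 - j^2"
  have "{(i, j). i \<in> {1..n} \<and> j \<in> {1..n} \<and> \<not> int p dvd (i^2 - j^2)} = Sigma {1..n} (\<lambda>i. {1..n} - {i})"
    using prime_dvd_diff_squares_iff[OF assms(1) pn] by auto
  then have "?X = (\<Prod>i\<in>{1..n}. \<Prod>j\<in>{1..n} - {i}. i^2 - j^2)"
    by (simp add: prod.Sigma)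
  then have table: "[2 ^ nat n * ?X = -1] (mod int p)"
    using diff_squares_table_cong[OF assms(1) pn] by simp
  have "(p - 1) div 2 = nat n" using pn by linarith
  then have euler: "[L = 2 ^ nat n] (mod int p)"
    using euler_criterion[OF assms(1) p2, of 2] pn unfolding L_def by simp
  have L_unit: "L * L = 1"
    unfolding L_def using p2 by (intro Legendre_squared) (simp add: cong_def)
  have "[-1 * L = 2 ^ nat n * ?X * L] (mod int p)"
    using table by (intro cong_mult cong_refl) (rule cong_sym)
  also have "[2 ^ nat n * ?X * L = L * ?X * L] (mod int p)"
    using euler by (intro cong_mult cong_refl) (rule cong_sym)
  also have "L * ?X * L = ?X * (L * L)" by (simp add: ac_simps)
  finally have "[?X = - L] (mod int p)"
    using L_unit by (simp add: cong_sym_eq)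
  then show ?thesis unfolding n_def L_def .
qed

end
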